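(* Fix $\nu>1$ and let $F_{\text{2d}}=\nu(\nu+1)/\sqrt{\nu^2+\nu-1}$. There exist $\delta>0$ and functions $\eta(F)>0$, $\tau_*(F)>0$ defined for $F\in(F_{\text{2d}},F_{\text{2d}}+\delta)$, with $\eta(F)\to\infty$ and $\tau_*(F)\to\infty$ as $F\to F_{\text{2d}}^+$, such that for every such $F$ and every choice of signs, the matrix $G(-\infty;\pm i\tau_*(F),\pm\eta(F))$ has a double eigenvalue (i.e. its two eigenvalues of smallest real part, $\gamma_{1,-}$ and $\gamma_{2,-}$, coincide) whose real part is strictly smaller than the real part of its remaining eigenvalue.
   Context: $G(-\infty;\lambda,\eta)=(E-\lambda I-i\eta A_2)A_1^{-1}$ with, at $(H,Q)=(1,1)$ and $s=\frac{\nu^2+\nu+1}{\nu(\nu+1)}$, $A_1=\begin{pmatrix}-s&1&0\\ H/F^2-Q^2/H^2&2Q/H-s&0\\0&0&Q/H-s\end{pmatrix}$, $A_2=\begin{pmatrix}0&0&1\\0&0&Q/H\\ H/F^2&0&0\end{pmatrix}$, $E=\begin{pmatrix}0&0&0\\ 2Q^2/H^3+1&-2Q/H^2&0\\0&0&-Q/H^2\end{pmatrix}$. This is the limiting coefficient matrix of the eigenvalue ODE at the upstream endstate $(1,1,0)$ of a planar hydraulic shock of the inviscid Saint-Venant equations with Froude number $F$ and downstream state $(\nu^{-2},\nu^{-3},0)$. *)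

theory Defs
  imports "HOL-Analysis.Analysis"
begin

text \<open>Saint-Venant hydraulic shock: limiting coefficient matrix of the eigenvalue ODE
  at the upstream endstate (H,Q,0), parameters nu (shock strength), F (Froude number).\<close>

definition sv_s :: "real \<Rightarrow> real" where
  "sv_s \<nu> = (\<nu>^2 + \<nu> + 1) / (\<nu> * (\<nu> + 1))"

definition sv_A1 :: "real \<Rightarrow> real \<Rightarrow> real \<Rightarrow> real \<Rightarrow> complex^3^3" where
  "sv_A1 \<nu> F H Q = (let s = sv_s \<nu> in
     vector [vector [complex_of_real (- s), 1, 0],
             vector [complex_of_real (H / F^2 - Q^2 / H^2), complex_of_real (2*Q/H - s), 0],
             vector [0, 0, complex_of_real (Q/H - s)]])"

definition sv_A2 :: "real \<Rightarrow> real \<Rightarrow> real \<Rightarrow> complex^3^3" where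
  "sv_A2 F H Q =
     vector [vector [0, 0, 1],
             vector [0, 0, complex_of_real (Q/H)],
             vector [complex_of_real (H / F^2), 0, 0]]"

definition sv_E :: "real \<Rightarrow> real \<Rightarrow> complex^3^3" where
  "sv_E H Q =
     vector [vector [0, 0, 0],
             vector [complex_of_real (2*Q^2/H^3 + 1), complex_of_real (-2*Q/H^2), 0],
             vector [0, 0, complex_of_real (-Q/H^2)]]"

definition sv_G :: "real \<Rightarrow> real \<Rightarrow> complex \<Rightarrow> real \<Rightarrow> complex^3^3" where
  "sv_G \<nu> F lam \<eta> =
     (sv_E 1 1 - mat lam - mat (\<i> * complex_of_real \<eta>) ** sv_A2 F 1 1)
       ** matrix_inv (sv_A1 \<nu> F 1 1)"

definition char_fun :: "complex^3^3 \<Rightarrow> complex \<Rightarrow> complex" where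
  "char_fun M z = det (mat z - M)"

definition double_lowest_eigenvalue :: "complex^3^3 \<Rightarrow> bool" where
  "double_lowest_eigenvalue M \<longleftrightarrow>
     (\<exists>\<gamma> \<mu>. (\<forall>z. char_fun M z = (z - \<gamma>)^2 * (z - \<mu>)) \<and> Re \<gamma> < Re \<mu>)"

end

theory Submission
  imports Defs
begin

text \<open>Write \<open>N = \<nu>\<^sup>2 + \<nu>\<close> and \<open>b = N\<^sup>2/F\<^sup>2\<close>; the threshold \<open>F = F2d\<close> is \<open>b = N - 1\<close>.
  Substituting \<open>\<lambda> = L - 1\<close> and \<open>z = N (L - w)\<close>, the characteristic polynomial of \<open>G\<close> becomes a
  cubic in \<open>w\<close> with coefficients in \<open>b\<close>, \<open>L\<close> and \<open>e = \<eta>\<^sup>2/F\<^sup>2\<close>, so a double eigenvalue is a double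
  root of this cubic. For \<open>\<lambda> = i\<tau>\<close> put \<open>s = 1/\<tau>\<close>, \<open>h = s\<^sup>2\<close> and write the double root as
  \<open>x + iY/s\<close>: requiring a double root with \<open>e\<close> real gives three real polynomial equations in
  \<open>(x, Y, h, b)\<close> which stay regular as \<open>\<tau> \<rightarrow> \<infinity>\<close>. At \<open>h = 0\<close>, \<open>b = N - 1\<close> they have an explicit
  solution with invertible Jacobian, so the open mapping theorem yields solutions for all \<open>b\<close> near
  \<open>N - 1\<close>. An algebraic identity shows that along them \<open>h\<close> has the sign of \<open>N - 1 - b\<close> and is
  \<open>O(N - 1 - b)\<close>; hence just above \<open>F2d\<close> we get \<open>\<tau> = 1/\<surd>h \<rightarrow> \<infinity>\<close>, and \<open>\<eta> = F \<surd>e\<close> grows like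
  \<open>\<tau>\<close> because \<open>e h\<close> stays away from zero. That the simple eigenvalue lies to the right is an open
  condition which holds at the explicit solution.\<close>

lemma matrix_diff_rdistrib:
  fixes A B :: "'a::ring_1^'n^'m"
  shows "(A - B) ** C = A ** C - B ** C"
  by (simp add: matrix_matrix_mult_def vec_eq_iff sum_subtractf left_diff_distrib)

lemma matrix_inv_right:
  fixes A :: "'a::field^'n^'n"
  assumes "invertible A"
  shows "A ** matrix_inv A = mat 1"
  using someI_ex[OF assms[unfolded invertible_def]] unfolding matrix_inv_def by blast

lemma det_mat_diff_mult_matrix_inv:
  fixes A B :: "'a::field^'n^'n"
  assumes "det A \<noteq> 0"
  shows "det (mat z - B ** matrix_inv A) = det (mat z ** A - B) / det A"
proof -
  have "invertible A" using assms invertible_det_nz by blast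
  then have "matrix_inv A ** A = mat 1"
    using matrix_inv_right matrix_left_right_inverse by blast
  then have "(mat z - B ** matrix_inv A) ** A = mat z ** A - B"
    by (simp add: matrix_diff_rdistrib flip: matrix_mul_assoc)
  then have "det (mat z - B ** matrix_inv A) * det A = det (mat z ** A - B)"
    by (metis det_mul)
  then show ?thesis using assms by (simp add: field_simps)
qed

lemma mat_entry: "mat c $ i $ j = (if i = j then c else 0)"
  by (simp add: mat_def)

lemma mat_mult_entry: "(mat c ** A) $ i $ j = c * A $ i $ j"
  by (simp add: matrix_matrix_mult_def mat_def if_distrib if_distribR sum.delta' cong: if_cong)

lemma image_ball_interior_of_injective_derivative:
  fixes f :: "'a::euclidean_space \<Rightarrow> 'a"
  assumes "\<And>y. isCont f y" and "(f has_derivative f') (at x)" and "inj f'" and "r > 0"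
  shows "f x \<in> interior (f ` ball x r)"
proof -
  have "linear f'" using assms(2) has_derivative_linear by blast
  then have "surj f'" using assms(3) linear_injective_imp_surjective by blast
  then obtain g where "linear g" "f' \<circ> g = id"
    using \<open>linear f'\<close> linear_surjective_right_inverse by blast
  show ?thesis
  proof (rule sussmann_open_mapping[OF open_UNIV _ _ assms(2)])
    show "continuous_on UNIV f" using assms(1) by (simp add: continuous_at_imp_continuous_on)
    show "bounded_linear g" using \<open>linear g\<close> linear_conv_bounded_linear by blast
  qed (use \<open>f' \<circ> g = id\<close> \<open>r > 0\<close> in auto)
qed

lemma filterlim_divide_square_at_left:
  fixes a c :: real
  assumes "a > 0" and "c > 0"
  shows "filterlim (\<lambda>x. c / x^2) (at_left (c / a^2)) (at_right a)"
proof (rule tendsto_imp_filterlim_at_left)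
  have "((\<lambda>x. c / x^2) \<longlongrightarrow> c / a^2) (at a)"
    using assms(1) by (intro tendsto_intros) auto
  then show "((\<lambda>x. c / x^2) \<longlongrightarrow> c / a^2) (at_right a)"
    by (rule filterlim_mono) (simp_all add: at_le)
  show "\<forall>\<^sub>F x in at_right a. c / x^2 < c / a^2"
    using eventually_at_right_less[of a]
    by eventually_elim (use assms in \<open>simp add: divide_strict_left_mono power_strict_mono\<close>)
qed

lemma filterlim_inverse_sqrt_at_top:
  fixes f :: "'a \<Rightarrow> real"
  assumes "(f \<longlongrightarrow> 0) F" and "\<forall>\<^sub>F x in F. 0 < f x"
  shows "filterlim (\<lambda>x. 1 / sqrt (f x)) at_top F"
proof -
  have "filterlim (\<lambda>x. sqrt (f x)) (at_right 0) F"
    using tendsto_real_sqrt[OF assms(1)] assms(2)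
    by (auto intro: tendsto_imp_filterlim_at_right elim: eventually_mono)
  then show ?thesis
    using filterlim_compose[OF filterlim_inverse_at_top_right] by (simp add: inverse_eq_divide)
qed

lemma eventually_at_right_interval:
  fixes a :: real
  assumes "\<forall>\<^sub>F x in at_right a. P x"
  obtains \<delta> where "\<delta> > 0" and "\<forall>x\<in>{a<..<a + \<delta>}. P x"
proof -
  obtain c where "c > a" and "\<forall>x>a. x < c \<longrightarrow> P x" using assms unfolding eventually_at_right_field by blast
  then show ?thesis using that[of "c - a"] by auto
qed

section \<open>The characteristic polynomial of \<open>G\<close>\<close>

definition sv_cubic :: "'a::field \<Rightarrow> 'a \<Rightarrow> 'a \<Rightarrow> 'a \<Rightarrow> 'a \<Rightarrow> 'a" where
  "sv_cubic N b L e w = (1 - b) * w^3 + (2*b*L - N) * w^2 + (N*L - b*L^2 - 1 + e) * w + e"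

lemma sv_matrices_unit_state:
  fixes \<nu> F :: real
  defines "s \<equiv> complex_of_real (sv_s \<nu>)" and "a \<equiv> complex_of_real (1 / F^2)"
  shows "sv_A1 \<nu> F 1 1 = vector [vector [- s, 1, 0], vector [a - 1, 2 - s, 0], vector [0, 0, 1 - s]]"
    and "sv_A2 F 1 1 = vector [vector [0, 0, 1], vector [0, 0, 1], vector [a, 0, 0]]"
    and "sv_E 1 1 = vector [vector [0, 0, 0], vector [3, -2, 0], vector [0, 0, -1]]"
  unfolding s_def a_def by (simp_all add: sv_A1_def sv_A2_def sv_E_def Let_def)

lemma sv_coefficients_via_N_b:
  fixes \<nu> F :: real and N b :: complex
  assumes "\<nu> > 0" and N: "N = complex_of_real (\<nu>^2 + \<nu>)"
    and b: "b = complex_of_real ((\<nu>^2 + \<nu>)^2 / F^2)"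
  shows "N \<noteq> 0" and "complex_of_real (sv_s \<nu>) = (N + 1) / N" and "complex_of_real (1 / F^2) = b / N^2"
proof -
  have "\<nu>^2 + \<nu> > 0" using assms(1) by (simp add: add_pos_pos)
  then show "N \<noteq> 0" unfolding N of_real_eq_0_iff by simp
  then show "complex_of_real (sv_s \<nu>) = (N + 1) / N"
    unfolding sv_s_def N by (simp add: algebra_simps power2_eq_square)
  show "complex_of_real (1 / F^2) = b / N^2"
    using \<open>N \<noteq> 0\<close> unfolding N b by (simp add: field_simps)
qed

lemma det_sv_A1:
  fixes \<nu> F :: real and N b :: complex
  assumes "\<nu> > 0" and "N = complex_of_real (\<nu>^2 + \<nu>)"
    and "b = complex_of_real ((\<nu>^2 + \<nu>)^2 / F^2)"
  shows "det (sv_A1 \<nu> F 1 1) = (b - 1) / N^3"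
proof -
  define s where "s = complex_of_real (sv_s \<nu>)"
  define a where "a = complex_of_real (1 / F^2)"
  have "N \<noteq> 0" "s = (N + 1) / N" "a = b / N^2"
    using sv_coefficients_via_N_b[OF assms] unfolding s_def a_def by simp_all
  then show ?thesis
    unfolding sv_matrices_unit_state s_def[symmetric] a_def[symmetric]
    by (simp add: det_3) (simp add: field_simps power2_eq_square power3_eq_cube)
qed

lemma det_sv_pencil:
  fixes \<nu> F \<eta> :: real and N b :: complex
  assumes "\<nu> > 0" and "N = complex_of_real (\<nu>^2 + \<nu>)"
    and "b = complex_of_real ((\<nu>^2 + \<nu>)^2 / F^2)"
  shows "det (mat z ** sv_A1 \<nu> F 1 1 - (sv_E 1 1 - mat (L - 1) - mat (\<i> * complex_of_real \<eta>) ** sv_A2 F 1 1))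
    = sv_cubic N b L (complex_of_real (\<eta>^2 / F^2)) (L - z / N)"
proof -
  define s where "s = complex_of_real (sv_s \<nu>)"
  define a where "a = complex_of_real (1 / F^2)"
  have "N \<noteq> 0" "s = (N + 1) / N" "a = b / N^2"
    using sv_coefficients_via_N_b[OF assms] unfolding s_def a_def by simp_all
  moreover have "complex_of_real (\<eta>^2 / F^2) = (complex_of_real \<eta>)^2 * a"
    unfolding a_def by simp
  ultimately show ?thesis
    unfolding sv_matrices_unit_state s_def[symmetric] a_def[symmetric]
    by (simp add: sv_cubic_def det_3 mat_mult_entry mat_entry)
      (simp add: field_simps power2_eq_square power3_eq_cube)
qed

lemma sv_cubic_double_root:
  fixes N b L u :: "'a::field"
  assumes "b \<noteq> 1"
  defines "V \<equiv> 2 * b * (L - u) + 2 * u - N"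
  assumes residual: "b * L^2 - N * L + 1 - (b - 1) * u^2 - 2 * u * V - u^2 * V = 0"
  shows "sv_cubic N b L (u^2 * V) w = (1 - b) * (w - u)^2 * (w - V / (b - 1))"
proof -
  have "b - 1 \<noteq> 0" using assms(1) by simp
  then have "sv_cubic N b L (u^2 * V) w - (1 - b) * (w - u)^2 * (w - V / (b - 1))
      = - (b * L^2 - N * L + 1 - (b - 1) * u^2 - 2 * u * V - u^2 * V) * w"
    unfolding sv_cubic_def V_def
    by (simp add: field_simps power2_eq_square power3_eq_cube)
  then show ?thesis unfolding residual by simp
qed

lemma char_fun_sv_G:
  fixes \<nu> F \<eta> :: real and N b :: complex
  assumes "\<nu> > 0" and "N = complex_of_real (\<nu>^2 + \<nu>)"
    and "b = complex_of_real ((\<nu>^2 + \<nu>)^2 / F^2)" and "b \<noteq> 1"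
  shows "char_fun (sv_G \<nu> F (L - 1) \<eta>) z
    = N^3 / (b - 1) * sv_cubic N b L (complex_of_real (\<eta>^2 / F^2)) (L - z / N)"
proof -
  have "N \<noteq> 0" using sv_coefficients_via_N_b(1)[OF assms(1-3)] .
  then have "det (sv_A1 \<nu> F 1 1) \<noteq> 0"
    unfolding det_sv_A1[OF assms(1-3)] using assms(4) by simp
  then show ?thesis
    unfolding char_fun_def sv_G_def det_mat_diff_mult_matrix_inv[OF \<open>det (sv_A1 \<nu> F 1 1) \<noteq> 0\<close>]
      det_sv_pencil[OF assms(1-3)] det_sv_A1[OF assms(1-3)]
    by simp
qed

lemma char_fun_sv_G_double_root:
  fixes \<nu> F \<eta> :: real and N b L u :: complex
  assumes "\<nu> > 0" and "N = complex_of_real (\<nu>^2 + \<nu>)"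
    and "b = complex_of_real ((\<nu>^2 + \<nu>)^2 / F^2)" and "b \<noteq> 1"
  defines "V \<equiv> 2 * b * (L - u) + 2 * u - N"
  assumes residual: "b * L^2 - N * L + 1 - (b - 1) * u^2 - 2 * u * V - u^2 * V = 0"
    and e: "complex_of_real (\<eta>^2 / F^2) = u^2 * V"
  shows "char_fun (sv_G \<nu> F (L - 1) \<eta>) z = (z - N * (L - u))^2 * (z - N * (L - V / (b - 1)))"
proof -
  have "N \<noteq> 0" using sv_coefficients_via_N_b(1)[OF assms(1-3)] .
  define u' where "u' = V / (b - 1)"
  have "char_fun (sv_G \<nu> F (L - 1) \<eta>) z = N^3 / (b - 1) * ((1 - b) * (L - z / N - u)^2 * (L - z / N - u'))"
    unfolding char_fun_sv_G[OF assms(1-4)] e u'_def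
      sv_cubic_double_root[OF assms(4) residual[unfolded V_def], folded V_def] ..
  also have "\<dots> = (z - N * (L - u))^2 * (z - N * (L - u'))"
    using assms(4) \<open>N \<noteq> 0\<close> by (simp add: field_simps power2_eq_square power3_eq_cube)
  finally show ?thesis unfolding u'_def .
qed

section \<open>The double-root equations\<close>

text \<open>Coordinates: \<open>L = 1 + i/s\<close>, \<open>h = s\<^sup>2\<close> and candidate double root \<open>u = x + iY/s\<close>; the
  polynomials below are the real and imaginary parts of the double-root residual and of
  \<open>e\<close>, scaled by powers of \<open>s\<close> (see \<open>dr_residual_scaled\<close>).\<close>

definition dr_re :: "real \<Rightarrow> real \<Rightarrow> real \<Rightarrow> real \<Rightarrow> real \<Rightarrow> real" where
  "dr_re N x Y h b = -b + h*(1+b-N) + 4*b*Y + (3-b-N)*Y^2 + (2*N-4*b)*x*h + 4*b*x*Y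
     + (6-6*b)*x*Y^2 + (b+N-3)*x^2*h + (2*b-2)*x^3*h"

definition dr_im :: "real \<Rightarrow> real \<Rightarrow> real \<Rightarrow> real \<Rightarrow> real \<Rightarrow> real" where
  "dr_im N x Y h b = (2*b-N)*h + (2*N-4*b)*Y*h + 2*b*Y^2 + (2-2*b)*Y^3 - 4*b*x*h
     + (2*b+2*N-6)*x*Y*h - 2*b*x^2*h + (6*b-6)*x^2*Y*h"

definition dr_im_e :: "real \<Rightarrow> real \<Rightarrow> real \<Rightarrow> real \<Rightarrow> real" where
  "dr_im_e N x Y b = (2*b-N) + 2*(N-2*b)*Y - 4*b*x + 6*(b-1)*x*Y"

definition dr_e :: "real \<Rightarrow> real \<Rightarrow> real \<Rightarrow> real \<Rightarrow> real \<Rightarrow> real" where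
  "dr_e N x Y h b = (h*x^2 - Y^2)*(2*b - 2*b*x + 2*x - N) - 2*x*Y*(2*b - 2*b*Y + 2*Y)"

lemma dr_residual_scaled:
  fixes N b x Y s :: real and u L V :: complex
  assumes "s \<noteq> 0"
  defines "u \<equiv> Complex x (Y / s)" and "L \<equiv> Complex 1 (1 / s)"
  defines "V \<equiv> 2 * b * (L - u) + 2 * u - N"
  shows "s^3 * (b * L^2 - N * L + 1 - (b - 1) * u^2 - 2 * u * V - u^2 * V)
      = Complex (s * dr_re N x Y (s^2) b) (dr_im N x Y (s^2) b)"
    and "s^3 * (u^2 * V) = Complex (s * dr_e N x Y (s^2) b) (s^2 * dr_im_e N x Y b - dr_im N x Y (s^2) b)"
  using assms(1) unfolding u_def L_def V_def dr_re_def dr_im_def dr_im_e_def dr_e_def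
  by (simp_all add: complex_eq_iff field_simps power2_eq_square power3_eq_cube)

definition dr_map :: "real \<Rightarrow> real \<times> real \<times> real \<times> real \<Rightarrow> real \<times> real \<times> real \<times> real" where
  "dr_map N = (\<lambda>(x, Y, h, b). (dr_re N x Y h b, dr_im N x Y h b, dr_im_e N x Y b, b))"

text \<open>\<open>dr_gap N x b = (b - 1) (Re u - Re u')\<close>, where \<open>u'\<close> is the simple root of the cubic.\<close>

definition dr_gap :: "real \<Rightarrow> real \<Rightarrow> real \<Rightarrow> real" where
  "dr_gap N x b = 3 * (b - 1) * x - (2 * b - N)"

lemma double_lowest_eigenvalue_sv_G:
  fixes \<nu> F N x Y h b \<sigma>\<^sub>1 \<sigma>\<^sub>2 :: real
  assumes "\<nu> > 0" and N: "N = \<nu>^2 + \<nu>" and b: "b = N^2 / F^2" and "b > 1" and "h > 0"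
    and branch: "dr_map N (x, Y, h, b) = (0, 0, 0, b)"
    and "dr_e N x Y h b \<ge> 0" and "dr_gap N x b > 0"
    and "\<sigma>\<^sub>1 \<in> {-1, 1}" and "\<sigma>\<^sub>2 \<in> {-1, 1}"
  shows "double_lowest_eigenvalue
    (sv_G \<nu> F (\<i> * complex_of_real (\<sigma>\<^sub>1 * (1 / sqrt h))) (\<sigma>\<^sub>2 * (F * sqrt (dr_e N x Y h b / h))))"
proof -
  \<comment> \<open>the equations only involve \<open>s\<^sup>2\<close>, so both signs of \<open>\<tau>\<close> are covered\<close>
  define s where "s = \<sigma>\<^sub>1 * sqrt h"
  have "s^2 = h" "s \<noteq> 0" "1 / s = \<sigma>\<^sub>1 * (1 / sqrt h)"
    using \<open>h > 0\<close> \<open>\<sigma>\<^sub>1 \<in> {-1, 1}\<close> unfolding s_def by (auto simp: power_mult_distrib)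
  define u where "u = Complex x (Y / s)"
  define L where "L = Complex 1 (1 / s)"
  define V where "V = 2 * complex_of_real b * (L - u) + 2 * u - complex_of_real N"
  have eqs: "dr_re N x Y h b = 0" "dr_im N x Y h b = 0" "dr_im_e N x Y b = 0"
    using branch by (simp_all add: dr_map_def)
  note scaled = dr_residual_scaled[OF \<open>s \<noteq> 0\<close>, where N=N and b=b and x=x and Y=Y, folded u_def L_def,
      unfolded \<open>s^2 = h\<close> eqs]
  have residual: "b * L^2 - N * L + 1 - (complex_of_real b - 1) * u^2 - 2 * u * V - u^2 * V = 0"
    using scaled(1) \<open>s \<noteq> 0\<close> unfolding V_def by (simp add: Complex_eq)
  have "complex_of_real s * (complex_of_real h * (u^2 * V) - complex_of_real (dr_e N x Y h b)) = 0"
    using scaled(2) unfolding V_def \<open>s^2 = h\<close>[symmetric]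
    by (simp add: Complex_eq algebra_simps power3_eq_cube power2_eq_square)
  then have "u^2 * V = complex_of_real (dr_e N x Y h b / h)"
    using \<open>s \<noteq> 0\<close> \<open>h > 0\<close> by (simp add: field_simps)
  moreover have "F \<noteq> 0" using b \<open>b > 1\<close> by auto
  ultimately have e: "complex_of_real ((\<sigma>\<^sub>2 * (F * sqrt (dr_e N x Y h b / h)))^2 / F^2) = u^2 * V"
    using \<open>h > 0\<close> \<open>dr_e N x Y h b \<ge> 0\<close> \<open>\<sigma>\<^sub>2 \<in> {-1, 1}\<close> by (auto simp: power_mult_distrib)
  have "complex_of_real b \<noteq> 1" using \<open>b > 1\<close> by simp
  have lambda: "\<i> * complex_of_real (\<sigma>\<^sub>1 * (1 / sqrt h)) = L - 1"
    unfolding L_def \<open>1 / s = _\<close>[symmetric] by (simp add: complex_eq_iff)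
  have char: "char_fun (sv_G \<nu> F (\<i> * complex_of_real (\<sigma>\<^sub>1 * (1 / sqrt h)))
        (\<sigma>\<^sub>2 * (F * sqrt (dr_e N x Y h b / h)))) z
      = (z - N * (L - u))^2 * (z - N * (L - V / (complex_of_real b - 1)))" for z
    unfolding lambda V_def
    by (rule char_fun_sv_G_double_root[OF \<open>\<nu> > 0\<close> _ _ \<open>complex_of_real b \<noteq> 1\<close>
          residual[unfolded V_def] e[unfolded V_def]])
      (simp_all add: N b)
  have "Re (V / (complex_of_real b - 1)) < x"
    using \<open>dr_gap N x b > 0\<close> \<open>b > 1\<close> unfolding V_def u_def L_def dr_gap_def
    by (simp add: field_simps)
  then have "Re (N * (L - u)) < Re (N * (L - V / (complex_of_real b - 1)))"
    using \<open>\<nu> > 0\<close> unfolding u_def L_def N by (simp add: add_pos_pos)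
  then show ?thesis unfolding double_lowest_eigenvalue_def using char by blast
qed

section \<open>The branch of solutions near the threshold\<close>

definition dr_map_deriv ::
  "real \<Rightarrow> real \<times> real \<times> real \<times> real \<Rightarrow> real \<times> real \<times> real \<times> real \<Rightarrow> real \<times> real \<times> real \<times> real" where
  "dr_map_deriv N = (\<lambda>(x, Y, h, b) (vx, vY, vh, vb).
    (((2*N-4*b)*h + 4*b*Y + (6-6*b)*Y^2 + 2*(b+N-3)*x*h + 3*(2*b-2)*x^2*h) * vx
      + (4*b + 2*(3-b-N)*Y + 4*b*x + 2*(6-6*b)*x*Y) * vY
      + ((1+b-N) + (2*N-4*b)*x + (b+N-3)*x^2 + (2*b-2)*x^3) * vh
      + (-1 + h + 4*Y - Y^2 - 4*x*h + 4*x*Y - 6*x*Y^2 + x^2*h + 2*x^3*h) * vb,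
     (-4*b*h + (2*b+2*N-6)*Y*h - 4*b*x*h + 2*(6*b-6)*x*Y*h) * vx
      + ((2*N-4*b)*h + 4*b*Y + 3*(2-2*b)*Y^2 + (2*b+2*N-6)*x*h + (6*b-6)*x^2*h) * vY
      + ((2*b-N) + (2*N-4*b)*Y - 4*b*x + (2*b+2*N-6)*x*Y - 2*b*x^2 + (6*b-6)*x^2*Y) * vh
      + (2*h - 4*Y*h + 2*Y^2 - 2*Y^3 - 4*x*h + 2*x*Y*h - 2*x^2*h + 6*x^2*Y*h) * vb,
     (-4*b + 6*(b-1)*Y) * vx + (2*(N-2*b) + 6*(b-1)*x) * vY + (2 - 4*Y - 4*x + 6*x*Y) * vb,
     vb))"

lemma has_derivative_dr_map: "(dr_map N has_derivative dr_map_deriv N w) (at w)"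
proof -
  obtain x Y h b where w: "w = (x, Y, h, b)" by (metis prod.exhaust)
  have eq: "dr_map N = (\<lambda>w. (dr_re N (fst w) (fst (snd w)) (fst (snd (snd w))) (snd (snd (snd w))),
      dr_im N (fst w) (fst (snd w)) (fst (snd (snd w))) (snd (snd (snd w))),
      dr_im_e N (fst w) (fst (snd w)) (snd (snd (snd w))), snd (snd (snd w))))"
    by (simp add: dr_map_def fun_eq_iff split: prod.split)
  show ?thesis
    unfolding eq w dr_re_def dr_im_def dr_im_e_def
    apply (rule has_derivative_eq_rhs)
     apply (rule derivative_intros)+
    apply (simp add: fun_eq_iff dr_map_deriv_def split: prod.split)
    apply (simp add: algebra_simps power2_eq_square power3_eq_cube)
    done
qed

definition dr_base :: "real \<Rightarrow> real \<times> real \<times> real \<times> real" where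
  "dr_base N = (N / (2 * (N - 1)), (N - 1) / (N - 2), 0, N - 1)"

lemma dr_base_reciprocals:
  assumes "N > 2"
  obtains r t where "r * (2 * (N - 1)) = 1" and "t * (N - 2) = 1" and "dr_base N = (N * r, (N - 1) * t, 0, N - 1)"
proof
  show "1 / (2 * (N - 1)) * (2 * (N - 1)) = 1" "1 / (N - 2) * (N - 2) = 1" using assms by simp_all
qed (simp add: dr_base_def)

lemma dr_map_base:
  assumes "N > 2"
  shows "dr_map N (dr_base N) = (0, 0, 0, N - 1)"
proof -
  obtain r t where rt: "r * (2 * (N - 1)) = 1" "t * (N - 2) = 1"
    and base: "dr_base N = (N * r, (N - 1) * t, 0, N - 1)"
    using dr_base_reciprocals[OF assms] .
  have "dr_re N (N * r) ((N - 1) * t) 0 (N - 1) = 0" using rt unfolding dr_re_def by algebra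
  moreover have "dr_im N (N * r) ((N - 1) * t) 0 (N - 1) = 0" using rt unfolding dr_im_def by algebra
  moreover have "dr_im_e N (N * r) ((N - 1) * t) (N - 1) = 0" using rt unfolding dr_im_e_def by algebra
  ultimately show ?thesis unfolding base dr_map_def by simp
qed

lemma inj_dr_map_deriv_base:
  assumes "N > 2"
  shows "inj (dr_map_deriv N (dr_base N))"
proof -
  obtain r t where rt: "r * (2 * (N - 1)) = 1" "t * (N - 2) = 1"
    and base: "dr_base N = (N * r, (N - 1) * t, 0, N - 1)"
    using dr_base_reciprocals[OF assms] .
  have "v = 0" if kernel: "dr_map_deriv N (dr_base N) v = 0" for v
  proof -
    obtain vx vY vh vb where v: "v = (vx, vY, vh, vb)" by (cases v) auto
    have eqs: "dr_map_deriv N (N * r, (N - 1) * t, 0, N - 1) (vx, vY, vh, vb) = (0, 0, 0, 0)"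
      using kernel unfolding v base by (simp add: zero_prod_def)
    then have "vb = 0" by (simp add: dr_map_deriv_def)
    note eqs = eqs[unfolded \<open>vb = 0\<close> dr_map_deriv_def, simplified]
    define c where "c = 2 * (N - 2) * N * (6 * N - 4 - N^2) * r^3"
    have e1: "-2 * (N - 1)^2 * t * vx - 4 * N * vY + c * vh = 0"
      using rt eqs[THEN conjunct1] unfolding c_def by algebra
    have e2: "-2 * (N - 1)^2 * t * vY + 2 * N * r * vh = 0"
      using rt eqs[THEN conjunct2, THEN conjunct1] by algebra
    have e3: "2 * (N - 1) * vx + 2 * (N - 2) * (N + 2) * r * vY = 0"
      using rt eqs[THEN conjunct2, THEN conjunct2] by algebra
    \<comment> \<open>cofactor expansion: the determinant of this \<open>3 \<times> 3\<close> system is \<open>-N\<^sup>3\<close>\<close>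
    have "-(N^3) * vY = 2 * (N - 1) * 2 * N * r * (-2 * (N - 1)^2 * t * vx - 4 * N * vY + c * vh)
        - 2 * (N - 1) * c * (-2 * (N - 1)^2 * t * vY + 2 * N * r * vh)
        + 2 * (N - 1)^2 * t * 2 * N * r * (2 * (N - 1) * vx + 2 * (N - 2) * (N + 2) * r * vY)"
      using rt unfolding c_def by algebra
    then have "vY = 0" unfolding e1 e2 e3 using assms by simp
    moreover have "r \<noteq> 0" using rt(1) by auto
    ultimately have "vx = 0" "vh = 0" using e2 e3 assms by auto
    with \<open>vY = 0\<close> \<open>vb = 0\<close> show "v = 0" unfolding v by (simp add: zero_prod_def)
  qed
  moreover have "linear (dr_map_deriv N (dr_base N))"
    using has_derivative_dr_map has_derivative_linear by blast
  ultimately show ?thesis using linear_injective_0 by blast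
qed

lemma dr_map_onto_near_base:
  assumes "N > 2" and "r > 0"
  obtains \<epsilon> where "\<epsilon> > 0" and "\<And>b. \<bar>b - (N - 1)\<bar> < \<epsilon> \<Longrightarrow>
      \<exists>x Y h. dist (x, Y, h, b) (dr_base N) < r \<and> dr_map N (x, Y, h, b) = (0, 0, 0, b)"
proof -
  have "isCont (dr_map N) w" for w
    using has_derivative_dr_map by (rule has_derivative_continuous)
  then have "(0, 0, 0, N - 1) \<in> interior (dr_map N ` ball (dr_base N) r)"
    using image_ball_interior_of_injective_derivative[OF _ has_derivative_dr_map
        inj_dr_map_deriv_base[OF assms(1)] assms(2)] dr_map_base[OF assms(1)] by simp
  then obtain \<epsilon> where "\<epsilon> > 0" and \<epsilon>: "ball (0, 0, 0, N - 1) \<epsilon> \<subseteq> dr_map N ` ball (dr_base N) r"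
    unfolding mem_interior by blast
  show ?thesis
  proof (rule that[OF \<open>\<epsilon> > 0\<close>])
    fix b assume "\<bar>b - (N - 1)\<bar> < \<epsilon>"
    then have "(0, 0, 0, b) \<in> dr_map N ` ball (dr_base N) r"
      using \<epsilon> by (auto simp: dist_Pair_Pair dist_real_def)
    then obtain w where "dist (dr_base N) w < r" and w: "dr_map N w = (0, 0, 0, b)" by auto
    moreover obtain x Y h b' where "w = (x, Y, h, b')" by (cases w) auto
    moreover have "b' = b" using w unfolding \<open>w = _\<close> by (simp add: dr_map_def)
    ultimately show "\<exists>x Y h. dist (x, Y, h, b) (dr_base N) < r \<and> dr_map N (x, Y, h, b) = (0, 0, 0, b)"
      by (auto simp: dist_commute)
  qed
qed

definition dr_h_coeff :: "real \<Rightarrow> real \<Rightarrow> real \<Rightarrow> real \<Rightarrow> real" where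
  "dr_h_coeff N x Y b = 2*(b-1)^2*Y^2*((1+b-N) + (2*N-4*b)*x + (b+N-3)*x^2 + (2*b-2)*x^3)
     + ((b-1)*(6*b-N) + (3-5*b+N)*((b-1)*Y + b))
       * ((2*b-N) + (2*N-4*b)*Y - 4*b*x + (2*b+2*N-6)*x*Y - 2*b*x^2 + (6*b-6)*x^2*Y)"

text \<open>On the branch the left-hand side vanishes, so \<open>h\<close> has the sign of \<open>N - 1 - b\<close> wherever
  \<open>dr_h_coeff\<close> is negative, as it is near the base point: a real \<open>\<tau>\<close> exists exactly above the
  threshold.\<close>

lemma dr_h_identity:
  "2*(b-1)^2*Y^2*(dr_re N x Y h b + Y * dr_im_e N x Y b)
     + ((b-1)*(6*b-N) + (3-5*b+N)*((b-1)*Y + b)) * dr_im N x Y h b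
   = 2*b*Y^2*(N-1-b) + h * dr_h_coeff N x Y b"
  unfolding dr_re_def dr_im_def dr_im_e_def dr_h_coeff_def
  by (simp add: algebra_simps power2_eq_square power3_eq_cube)

lemma dr_branch_h_bounds:
  assumes branch: "dr_map N (x, Y, h, b) = (0, 0, 0, b)"
    and "dr_h_coeff N x Y b < q" and "q < 0" and "0 < Y" and "Y \<le> M" and "0 < b" and "b < N - 1"
  shows "0 < h" and "h \<le> 2 * (N - 1) * M^2 / (-q) * (N - 1 - b)"
proof -
  have h: "h * (- dr_h_coeff N x Y b) = 2 * b * Y^2 * (N - 1 - b)"
    using dr_h_identity[of b Y N x h] branch by (simp add: dr_map_def algebra_simps)
  moreover have "0 < 2 * b * Y^2 * (N - 1 - b)" using assms by simp
  moreover have "0 < - dr_h_coeff N x Y b" using assms(2,3) by simp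
  ultimately show "0 < h" by (metis zero_less_mult_pos2)
  then have "h * (-q) \<le> h * (- dr_h_coeff N x Y b)" using assms(2) by simp
  also have "\<dots> \<le> 2 * (N - 1) * M^2 * (N - 1 - b)"
    unfolding h using assms(4-7) by (intro mult_right_mono mult_mono power_mono) auto
  finally show "h \<le> 2 * (N - 1) * M^2 / (-q) * (N - 1 - b)"
    using assms(3) by (simp add: field_simps)
qed

lemma dr_base_signs:
  assumes "N > 2" and "dr_base N = (x\<^sub>0, Y\<^sub>0, h\<^sub>0, b\<^sub>0)"
  shows "dr_h_coeff N x\<^sub>0 Y\<^sub>0 b\<^sub>0 < 0" and "0 < dr_e N x\<^sub>0 Y\<^sub>0 h\<^sub>0 b\<^sub>0"
    and "0 < dr_gap N x\<^sub>0 b\<^sub>0" and "0 < Y\<^sub>0"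
proof -
  obtain r t where rt: "r * (2 * (N - 1)) = 1" "t * (N - 2) = 1"
    and base: "dr_base N = (N * r, (N - 1) * t, 0, N - 1)"
    using dr_base_reciprocals[OF assms(1)] .
  have "0 < r * (2 * (N - 1))" "0 < t * (N - 2)" using rt by simp_all
  then have "r > 0" "t > 0" using assms(1) by (simp_all add: zero_less_mult_iff)
  have "dr_h_coeff N (N * r) ((N - 1) * t) (N - 1) = - (N^3 * (N - 2) * r)"
    using rt unfolding dr_h_coeff_def by algebra
  moreover have "dr_e N (N * r) ((N - 1) * t) 0 (N - 1) = 2 * ((N - 1) * t)^2 * (N - 2) * r"
    using rt unfolding dr_e_def by algebra
  moreover have "dr_gap N (N * r) (N - 1) = (N - 2) * (N + 2) * r"
    using rt unfolding dr_gap_def by algebra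
  ultimately show "dr_h_coeff N x\<^sub>0 Y\<^sub>0 b\<^sub>0 < 0" "0 < dr_e N x\<^sub>0 Y\<^sub>0 h\<^sub>0 b\<^sub>0"
    "0 < dr_gap N x\<^sub>0 b\<^sub>0" "0 < Y\<^sub>0"
    using assms \<open>r > 0\<close> \<open>t > 0\<close> unfolding base by auto
qed

lemma dr_base_neighbourhood:
  assumes "N > 2" and base: "dr_base N = (x\<^sub>0, Y\<^sub>0, h\<^sub>0, b\<^sub>0)"
  obtains r where "r > 0" and "\<And>x Y h b. dist (x, Y, h, b) (dr_base N) < r \<Longrightarrow>
      dr_h_coeff N x Y b < dr_h_coeff N x\<^sub>0 Y\<^sub>0 b\<^sub>0 / 2 \<and> dr_e N x\<^sub>0 Y\<^sub>0 h\<^sub>0 b\<^sub>0 / 2 < dr_e N x Y h b \<and>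
      0 < dr_gap N x b \<and> 0 < Y \<and> Y < Y\<^sub>0 + 1 \<and> 1 < b"
proof -
  define S where "S = {w. dr_h_coeff N (fst w) (fst (snd w)) (snd (snd (snd w))) < dr_h_coeff N x\<^sub>0 Y\<^sub>0 b\<^sub>0 / 2
      \<and> dr_e N x\<^sub>0 Y\<^sub>0 h\<^sub>0 b\<^sub>0 / 2 < dr_e N (fst w) (fst (snd w)) (fst (snd (snd w))) (snd (snd (snd w)))
      \<and> 0 < dr_gap N (fst w) (snd (snd (snd w))) \<and> 0 < fst (snd w) \<and> fst (snd w) < Y\<^sub>0 + 1
      \<and> 1 < snd (snd (snd w))}"
  have "open S"
    unfolding S_def dr_h_coeff_def dr_e_def dr_gap_def
    by (intro open_Collect_conj open_Collect_less continuous_intros)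
  moreover have "b\<^sub>0 = N - 1" using base by (simp add: dr_base_def)
  then have "dr_base N \<in> S"
    using dr_base_signs[OF assms] assms(1) unfolding S_def base by simp
  ultimately obtain r where "r > 0" "ball (dr_base N) r \<subseteq> S"
    using open_contains_ball by blast
  then show ?thesis using that by (fastforce simp: S_def dist_commute)
qed

lemma dr_branch_near_base:
  assumes "N > 2"
  shows "\<exists>\<epsilon>>0. \<exists>E>0. \<exists>K. \<forall>b\<in>{N - 1 - \<epsilon><..<N - 1}. \<exists>x Y h.
      1 < b \<and> dr_map N (x, Y, h, b) = (0, 0, 0, b) \<and> 0 < h \<and> h \<le> K * (N - 1 - b)
      \<and> E < dr_e N x Y h b \<and> 0 < dr_gap N x b"
proof -
  obtain x\<^sub>0 Y\<^sub>0 h\<^sub>0 b\<^sub>0 where base: "dr_base N = (x\<^sub>0, Y\<^sub>0, h\<^sub>0, b\<^sub>0)" by (cases "dr_base N") auto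
  define q where "q = dr_h_coeff N x\<^sub>0 Y\<^sub>0 b\<^sub>0 / 2"
  define E where "E = dr_e N x\<^sub>0 Y\<^sub>0 h\<^sub>0 b\<^sub>0 / 2"
  have "q < 0" "E > 0" using dr_base_signs[OF assms base] unfolding q_def E_def by simp_all
  obtain r where "r > 0" and near: "\<And>x Y h b. dist (x, Y, h, b) (dr_base N) < r \<Longrightarrow>
      dr_h_coeff N x Y b < q \<and> E < dr_e N x Y h b \<and> 0 < dr_gap N x b \<and> 0 < Y \<and> Y < Y\<^sub>0 + 1 \<and> 1 < b"
    using dr_base_neighbourhood[OF assms base] unfolding q_def E_def by blast
  obtain \<epsilon> where "\<epsilon> > 0" and onto: "\<And>b. \<bar>b - (N - 1)\<bar> < \<epsilon> \<Longrightarrow>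
      \<exists>x Y h. dist (x, Y, h, b) (dr_base N) < r \<and> dr_map N (x, Y, h, b) = (0, 0, 0, b)"
    using dr_map_onto_near_base[OF assms \<open>r > 0\<close>] by blast
  have "\<exists>x Y h. 1 < b \<and> dr_map N (x, Y, h, b) = (0, 0, 0, b) \<and> 0 < h
      \<and> h \<le> 2 * (N - 1) * (Y\<^sub>0 + 1)^2 / (-q) * (N - 1 - b) \<and> E < dr_e N x Y h b \<and> 0 < dr_gap N x b"
    if "b \<in> {N - 1 - \<epsilon><..<N - 1}" for b
  proof -
    have "\<bar>b - (N - 1)\<bar> < \<epsilon>" using that by auto
    then obtain x Y h where "dist (x, Y, h, b) (dr_base N) < r"
      and branch: "dr_map N (x, Y, h, b) = (0, 0, 0, b)"
      using onto by blast
    note near = near[OF this(1)]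
    then have "0 < h \<and> h \<le> 2 * (N - 1) * (Y\<^sub>0 + 1)^2 / (-q) * (N - 1 - b)"
      using dr_branch_h_bounds[OF branch, of q "Y\<^sub>0 + 1"] \<open>q < 0\<close> that by auto
    with near branch show ?thesis by blast
  qed
  then show ?thesis using \<open>\<epsilon> > 0\<close> \<open>E > 0\<close> by blast
qed

lemma dr_branch:
  assumes "N > 2"
  obtains x Y h :: "real \<Rightarrow> real" and E :: real where "E > 0"
    and "\<forall>\<^sub>F b in at_left (N - 1). 1 < b \<and> dr_map N (x b, Y b, h b, b) = (0, 0, 0, b) \<and> 0 < h b
      \<and> E < dr_e N (x b) (Y b) (h b) b \<and> 0 < dr_gap N (x b) b"
    and "(h \<longlongrightarrow> 0) (at_left (N - 1))"
proof -
  obtain \<epsilon> E K where "\<epsilon> > 0" "E > 0"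
    and "\<forall>b\<in>{N - 1 - \<epsilon><..<N - 1}. \<exists>x Y h. 1 < b \<and> dr_map N (x, Y, h, b) = (0, 0, 0, b)
      \<and> 0 < h \<and> h \<le> K * (N - 1 - b) \<and> E < dr_e N x Y h b \<and> 0 < dr_gap N x b"
    using dr_branch_near_base[OF assms] by blast
  then obtain x Y h where on_branch: "\<And>b. b \<in> {N - 1 - \<epsilon><..<N - 1} \<Longrightarrow> 1 < b
      \<and> dr_map N (x b, Y b, h b, b) = (0, 0, 0, b) \<and> 0 < h b \<and> h b \<le> K * (N - 1 - b)
      \<and> E < dr_e N (x b) (Y b) (h b) b \<and> 0 < dr_gap N (x b) b"
    by metis
  have eventually_near: "\<forall>\<^sub>F b in at_left (N - 1). b \<in> {N - 1 - \<epsilon><..<N - 1}"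
    using eventually_at_left_real \<open>\<epsilon> > 0\<close> by simp
  show ?thesis
  proof (rule that[OF \<open>E > 0\<close>])
    show "\<forall>\<^sub>F b in at_left (N - 1). 1 < b \<and> dr_map N (x b, Y b, h b, b) = (0, 0, 0, b) \<and> 0 < h b
        \<and> E < dr_e N (x b) (Y b) (h b) b \<and> 0 < dr_gap N (x b) b"
      using eventually_near by eventually_elim (use on_branch in blast)
    have "((\<lambda>b. K * (N - 1 - b)) \<longlongrightarrow> K * (N - 1 - (N - 1))) (at_left (N - 1))"
      by (intro tendsto_intros)
    then have "((\<lambda>b. K * (N - 1 - b)) \<longlongrightarrow> 0) (at_left (N - 1))" by simp
    moreover have "\<forall>\<^sub>F b in at_left (N - 1). 0 \<le> h b"
      using eventually_near by eventually_elim (use on_branch in fastforce)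
    moreover have "\<forall>\<^sub>F b in at_left (N - 1). h b \<le> K * (N - 1 - b)"
      using eventually_near by eventually_elim (use on_branch in blast)
    ultimately show "(h \<longlongrightarrow> 0) (at_left (N - 1))"
      by (intro tendsto_sandwich[OF _ _ tendsto_const, of 0 h _ "\<lambda>b. K * (N - 1 - b)"])
  qed
qed

lemma dr_branch_above_threshold:
  assumes "N > 2"
  defines "F\<^sub>0 \<equiv> N / sqrt (N - 1)"
  obtains x Y h :: "real \<Rightarrow> real" and E :: real where "E > 0"
    and "\<forall>\<^sub>F F in at_right F\<^sub>0. F\<^sub>0 < F \<and> 1 < N^2 / F^2
      \<and> dr_map N (x F, Y F, h F, N^2 / F^2) = (0, 0, 0, N^2 / F^2)
      \<and> 0 < h F \<and> E < dr_e N (x F) (Y F) (h F) (N^2 / F^2) \<and> 0 < dr_gap N (x F) (N^2 / F^2)"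
    and "(h \<longlongrightarrow> 0) (at_right F\<^sub>0)"
proof -
  obtain x Y h E where "E > 0"
    and branch: "\<forall>\<^sub>F b in at_left (N - 1). 1 < b \<and> dr_map N (x b, Y b, h b, b) = (0, 0, 0, b) \<and> 0 < h b
      \<and> E < dr_e N (x b) (Y b) (h b) b \<and> 0 < dr_gap N (x b) b"
    and "(h \<longlongrightarrow> 0) (at_left (N - 1))"
    using dr_branch[OF assms(1)] .
  have "F\<^sub>0 > 0" using assms(1) unfolding F\<^sub>0_def by simp
  then have \<beta>: "filterlim (\<lambda>F. N^2 / F^2) (at_left (N - 1)) (at_right F\<^sub>0)"
    using filterlim_divide_square_at_left[of F\<^sub>0 "N^2"] assms(1) unfolding F\<^sub>0_def by (simp add: power_divide)
  show ?thesis
  proof (rule that[OF \<open>E > 0\<close>])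
    show "\<forall>\<^sub>F F in at_right F\<^sub>0. F\<^sub>0 < F \<and> 1 < N^2 / F^2
      \<and> dr_map N (x (N^2 / F^2), Y (N^2 / F^2), h (N^2 / F^2), N^2 / F^2) = (0, 0, 0, N^2 / F^2)
      \<and> 0 < h (N^2 / F^2) \<and> E < dr_e N (x (N^2 / F^2)) (Y (N^2 / F^2)) (h (N^2 / F^2)) (N^2 / F^2)
      \<and> 0 < dr_gap N (x (N^2 / F^2)) (N^2 / F^2)"
      using eventually_at_right_less eventually_compose_filterlim[OF branch \<beta>] by (rule eventually_conj)
    show "((\<lambda>F. h (N^2 / F^2)) \<longlongrightarrow> 0) (at_right F\<^sub>0)"
      using filterlim_compose[OF \<open>(h \<longlongrightarrow> 0) _\<close> \<beta>] .
  qed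
qed

definition sv_double_lowest_all_signs :: "real \<Rightarrow> real \<Rightarrow> real \<Rightarrow> real \<Rightarrow> bool" where
  "sv_double_lowest_all_signs \<nu> F \<tau> \<eta> \<longleftrightarrow> (\<forall>\<sigma>\<^sub>1\<in>{-1, 1}. \<forall>\<sigma>\<^sub>2\<in>{-1, 1}.
     double_lowest_eigenvalue (sv_G \<nu> F (\<i> * complex_of_real (\<sigma>\<^sub>1 * \<tau>)) (\<sigma>\<^sub>2 * \<eta>)))"

lemma sv_double_root_family:
  fixes \<nu> :: real
  assumes "\<nu> > 1"
  defines "N \<equiv> \<nu>^2 + \<nu>"
  defines "F\<^sub>0 \<equiv> N / sqrt (N - 1)"
  obtains \<eta> \<tau> :: "real \<Rightarrow> real"
  where "filterlim \<eta> at_top (at_right F\<^sub>0)" and "filterlim \<tau> at_top (at_right F\<^sub>0)"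
    and "\<forall>\<^sub>F F in at_right F\<^sub>0. 0 < \<eta> F \<and> 0 < \<tau> F \<and> sv_double_lowest_all_signs \<nu> F (\<tau> F) (\<eta> F)"
proof -
  have "\<nu>^2 > 1" using assms(1) by (simp add: one_less_power)
  then have "N > 2" using assms(1) unfolding N_def by linarith
  then have "F\<^sub>0 > 0" unfolding F\<^sub>0_def by simp
  obtain x Y h E where "E > 0"
    and branch: "\<forall>\<^sub>F F in at_right F\<^sub>0. F\<^sub>0 < F \<and> 1 < N^2 / F^2
      \<and> dr_map N (x F, Y F, h F, N^2 / F^2) = (0, 0, 0, N^2 / F^2)
      \<and> 0 < h F \<and> E < dr_e N (x F) (Y F) (h F) (N^2 / F^2) \<and> 0 < dr_gap N (x F) (N^2 / F^2)"
    and "(h \<longlongrightarrow> 0) (at_right F\<^sub>0)"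
    using dr_branch_above_threshold[OF \<open>N > 2\<close>] unfolding F\<^sub>0_def .
  define \<tau> where "\<tau> F = 1 / sqrt (h F)" for F
  define \<eta> where "\<eta> F = F * sqrt (dr_e N (x F) (Y F) (h F) (N^2 / F^2) / h F)" for F
  have \<tau>: "filterlim \<tau> at_top (at_right F\<^sub>0)"
    unfolding \<tau>_def using branch
    by (intro filterlim_inverse_sqrt_at_top[OF \<open>(h \<longlongrightarrow> 0) _\<close>]) (auto elim: eventually_mono)
  have "\<forall>\<^sub>F F in at_right F\<^sub>0. F\<^sub>0 * sqrt E * \<tau> F \<le> \<eta> F"
    using branch
  proof eventually_elim
    case (elim F)
    then have "F\<^sub>0 * sqrt E \<le> F * sqrt (dr_e N (x F) (Y F) (h F) (N^2 / F^2))"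
      using \<open>F\<^sub>0 > 0\<close> \<open>E > 0\<close> by (intro mult_mono) auto
    then show ?case
      using elim unfolding \<tau>_def \<eta>_def by (simp add: real_sqrt_divide divide_right_mono)
  qed
  then have \<eta>: "filterlim \<eta> at_top (at_right F\<^sub>0)"
    using \<open>F\<^sub>0 > 0\<close> \<open>E > 0\<close>
    by (intro filterlim_at_top_mono[OF filterlim_tendsto_pos_mult_at_top[OF tendsto_const _ \<tau>]]) auto
  have "\<forall>\<^sub>F F in at_right F\<^sub>0. 0 < \<eta> F \<and> 0 < \<tau> F \<and> sv_double_lowest_all_signs \<nu> F (\<tau> F) (\<eta> F)"
    using branch
  proof eventually_elim
    case (elim F)
    have "sv_double_lowest_all_signs \<nu> F (\<tau> F) (\<eta> F)"
      unfolding sv_double_lowest_all_signs_def \<tau>_def \<eta>_def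
      by (intro ballI double_lowest_eigenvalue_sv_G[OF _ N_def[THEN meta_eq_to_obj_eq] refl])
        (use elim \<open>E > 0\<close> assms(1) in auto)
    then show ?case using elim \<open>F\<^sub>0 > 0\<close> \<open>E > 0\<close> unfolding \<tau>_def \<eta>_def by simp
  qed
  with \<eta> \<tau> show ?thesis using that by blast
qed

theorem mainTheorem7:
  fixes \<nu> :: real
  assumes "\<nu> > 1"
  defines "F2d \<equiv> \<nu> * (\<nu> + 1) / sqrt (\<nu>^2 + \<nu> - 1)"
  shows "\<exists>\<delta>>0. \<exists>\<eta> \<tau>_star :: real \<Rightarrow> real.
           (\<forall>F\<in>{F2d<..<F2d+\<delta>}. \<eta> F > 0 \<and> \<tau>_star F > 0) \<and>
           filterlim \<eta> at_top (at_right F2d) \<and>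
           filterlim \<tau>_star at_top (at_right F2d) \<and>
           (\<forall>F\<in>{F2d<..<F2d+\<delta>}. \<forall>\<sigma>1\<in>{-1, 1::real}. \<forall>\<sigma>2\<in>{-1, 1::real}.
              double_lowest_eigenvalue
                (sv_G \<nu> F (\<i> * complex_of_real (\<sigma>1 * \<tau>_star F)) (\<sigma>2 * \<eta> F)))"
proof -
  have F2d: "F2d = (\<nu>^2 + \<nu>) / sqrt (\<nu>^2 + \<nu> - 1)"
    unfolding F2d_def by (simp add: algebra_simps power2_eq_square)
  obtain \<eta> \<tau> where "filterlim \<eta> at_top (at_right F2d)" and "filterlim \<tau> at_top (at_right F2d)"
    and "\<forall>\<^sub>F F in at_right F2d. 0 < \<eta> F \<and> 0 < \<tau> F \<and> sv_double_lowest_all_signs \<nu> F (\<tau> F) (\<eta> F)"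
    using sv_double_root_family[OF assms(1)] unfolding F2d .
  moreover from this(3) obtain \<delta> where "\<delta> > 0"
    and "\<forall>F\<in>{F2d<..<F2d + \<delta>}. 0 < \<eta> F \<and> 0 < \<tau> F \<and> sv_double_lowest_all_signs \<nu> F (\<tau> F) (\<eta> F)"
    by (rule eventually_at_right_interval)
  ultimately show ?thesis unfolding sv_double_lowest_all_signs_def by blast
qed

end
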